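(* For any $p\in(0,1/2]$ there is $\gamma>0$ depending only on $p$ such that for every $\varepsilon\in(0,1]$, every $n\geq 2$, every $s\in\mathbb{R}$ and every $x\in S^{n-1}$, $$\mathbb{P}\big\{\|(B_n^1(p)+s\,1_{n-1}1_n^\top)x\|_2\leq \gamma\sqrt{\varepsilon n}\big\}\leq \Big(\frac{e}{\varepsilon}\Big)^{\varepsilon(n-1)}(1-p)^{(n-1)(1-\varepsilon)}.$$
   Context: $B_n(p)$ is the $n\times n$ random matrix with i.i.d. entries taking value $1$ with probability $p$ and $0$ with probability $1-p$; $B_n^1(p)$ is the $(n-1)\times n$ matrix obtained from $B_n(p)$ by removing the last row. $1_m$ is the $m$-dimensional vector of all ones; $S^{n-1}$ is the unit Euclidean sphere in $\mathbb{R}^n$. *)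

theory Defs
  imports "HOL-Probability.Probability"
begin

definition bernoulli_matrix :: "real \<Rightarrow> nat \<Rightarrow> nat \<Rightarrow> (nat \<times> nat \<Rightarrow> real) pmf" where
  "bernoulli_matrix p m n =
     Pi_pmf ({..<m} \<times> {..<n}) 0 (\<lambda>_. map_pmf (\<lambda>b. if b then 1 else 0) (bernoulli_pmf p))"

definition B1 :: "real \<Rightarrow> nat \<Rightarrow> (nat \<times> nat \<Rightarrow> real) pmf" where
  "B1 p n = bernoulli_matrix p (n - 1) n"

definition shifted_norm :: "nat \<Rightarrow> nat \<Rightarrow> (nat \<times> nat \<Rightarrow> real) \<Rightarrow> real \<Rightarrow> (nat \<Rightarrow> real) \<Rightarrow> real" where
  "shifted_norm m n M s x = sqrt (\<Sum>i<m. (\<Sum>j<n. (M (i, j) + s) * x j)^2)"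

end

theory Submission
  imports Defs
begin

(* The i-th entry of (B + s 1 1^T) x is <r, x> + c, where r is the i-th row of B and
   c = s (sum x), a sum of independent Bernoulli variables. For unit x it lies in a window
   of half-width w = sqrt (p (1 - p)) / 100 with probability at most 1 - p. If some
   |x_j| >= 2w, the two values of r_j cannot both put the sum into the window, so
   conditioning on the other coordinates gives max p (1 - p). Otherwise half of the mass
   of x sits on coordinates below 2w; the characteristic function of <r, x> is then at
   most 1/16 at the frequencies h, 2h, 3h with h = 1/(6w), and Markov's inequality for the
   nonnegative kernel |1 + e^(ihz) + e^(2ihz) + e^(3ihz)|^2, which is at least 12 on the
   window, bounds the probability by 19/48.
   If the shifted norm is at most (w/2) sqrt (eps n), at most k = floor (eps m) of the
   m = n - 1 entries leave the window. The rows are independent, so a union bound over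
   the sets of m - k rows inside the window gives (m choose k) (1 - p)^(m - k), and
   (m choose k) <= (e m / k)^k <= (e / eps)^(eps m). *)

lemma cos_ge_one_minus_sq_div_2: "1 - x\<^sup>2 / 2 \<le> cos (x::real)"
proof -
  obtain t where "cos x = (\<Sum>m<2. cos_coeff m * x ^ m) + cos (t + 1/2 * real 2 * pi) / fact 2 * x ^ 2"
    using Maclaurin_cos_expansion[of x 2] by blast
  then have "cos x = 1 - cos t / 2 * x\<^sup>2"
    by (simp add: eval_nat_numeral cos_coeff_def)
  moreover have "cos t * x\<^sup>2 \<le> x\<^sup>2"
    using mult_right_mono[OF cos_le_one zero_le_power2] by simp
  ultimately show ?thesis by simp
qed

lemma cos_le_Taylor_4: "cos (x::real) \<le> 1 - x\<^sup>2 / 2 + x ^ 4 / 24"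
proof -
  obtain t where "cos x = (\<Sum>m<4. cos_coeff m * x ^ m) + cos (t + 1/2 * real 4 * pi) / fact 4 * x ^ 4"
    using Maclaurin_cos_expansion[of x 4] by blast
  moreover have "(\<Sum>m<4. f m) = f 0 + f 1 + f 2 + f 3" for f :: "nat \<Rightarrow> real"
    by (simp add: numeral_eq_Suc)
  ultimately have "cos x = 1 - x\<^sup>2 / 2 + cos t / 24 * x ^ 4"
    by (simp add: cos_coeff_def fact_numeral)
  moreover have "cos t * x ^ 4 \<le> x ^ 4"
    using mult_right_mono[OF cos_le_one, of "x ^ 4" t] by simp
  ultimately show ?thesis by simp
qed

lemma one_minus_cos_ge_sq_div_4:
  assumes "\<bar>x::real\<bar> \<le> 1"
  shows "x\<^sup>2 / 4 \<le> 1 - cos x"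
proof -
  have "x ^ 4 = x\<^sup>2 * x\<^sup>2" by algebra
  also have "\<dots> \<le> x\<^sup>2"
    using assms mult_right_mono[of "x\<^sup>2" 1 "x\<^sup>2"] by (simp add: abs_square_le_1)
  finally show ?thesis using cos_le_Taylor_4[of x] zero_le_power2[of x] by linarith
qed

lemma exp_minus_le_inverse_one_plus:
  assumes "0 \<le> (y::real)"
  shows "exp (- y) \<le> 1 / (1 + y)"
  using assms exp_ge_add_one_self[of y] by (simp add: exp_minus field_simps)

lemma cis_sum: "finite A \<Longrightarrow> cis (\<Sum>j\<in>A. f j) = (\<Prod>j\<in>A. cis (f j))"
  by (induction A rule: finite_induct) (auto simp: cis_mult[symmetric])

lemma power_div_fact_le_exp:
  assumes "0 \<le> (y::real)"
  shows "y ^ k / fact k \<le> exp y"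
proof -
  have "(\<lambda>n. y ^ n /\<^sub>R fact n) sums exp y" by (rule exp_converges)
  then have "summable (\<lambda>n. y ^ n /\<^sub>R fact n)" and "exp y = (\<Sum>n. y ^ n /\<^sub>R fact n)"
    by (auto simp: sums_iff)
  moreover have "(\<Sum>n\<in>{k}. y ^ n /\<^sub>R fact n) \<le> (\<Sum>n. y ^ n /\<^sub>R fact n)"
    using assms calculation(1) by (intro sum_le_suminf) auto
  ultimately show ?thesis by (simp add: divide_inverse_commute)
qed

lemma binomial_le_exp_mult_div_power:
  assumes "0 < k" "k \<le> m"
  shows "real (m choose k) \<le> (exp 1 * real m / real k) ^ k"
proof -
  have "real (m choose k) = fact m / fact (m - k) / fact k"
    using fact_binomial[OF assms(2), where 'a=real] by (simp add: field_simps)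
  also have "fact m / fact (m - k) = real (fact m div fact (m - k))"
    by (simp add: fact_dvd real_of_nat_div)
  also have "\<dots> \<le> real m ^ k"
    using fact_div_fact_le_pow[OF assms(2)] by (metis of_nat_le_iff of_nat_power)
  also have "real m ^ k / fact k \<le> real m ^ k * (exp (real k) / real k ^ k)"
    using power_div_fact_le_exp[of "real k" k] assms
    by (simp add: field_simps)
  also have "\<dots> = (exp 1 * real m / real k) ^ k"
    by (simp add: power_divide power_mult_distrib exp_of_nat_mult[symmetric])
  finally show ?thesis by (simp add: divide_right_mono)
qed

lemma exp_mult_div_power_le_powr:
  assumes "1 \<le> k" "real k \<le> T" "T \<le> real m"
  shows "(exp 1 * real m / real k) ^ k \<le> (exp 1 * real m / T) powr T"
proof -
  have k: "1 \<le> real k" and T: "1 \<le> T" using assms by auto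
  have "real k * (ln T - ln (real k)) \<le> T - real k"
  proof -
    have "real k * ln (T / real k) \<le> real k * (T / real k - 1)"
      using k T by (intro mult_left_mono ln_le_minus_one) auto
    also have "\<dots> = T - real k" using k by (simp add: field_simps)
    finally show ?thesis using k T by (simp add: ln_div)
  qed
  moreover have "0 \<le> (T - real k) * (ln (real m) - ln T)"
    using assms T by (intro mult_nonneg_nonneg) auto
  ultimately have "real k * (1 + ln (real m) - ln (real k)) \<le> T * (1 + ln (real m) - ln T)"
    by (simp add: algebra_simps)
  then have "exp (real k * ln (exp 1 * real m / real k)) \<le> exp (T * ln (exp 1 * real m / T))"
    using k T assms(3) by (simp add: ln_div ln_mult)
  then show ?thesis
    using k T assms(3) by (simp add: powr_def powr_realpow[symmetric])
qed

lemma binomial_floor_mult_le_powr: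
  assumes "0 < \<epsilon>" "\<epsilon> \<le> 1"
  shows "real (m choose nat \<lfloor>\<epsilon> * real m\<rfloor>) \<le> (exp 1 / \<epsilon>) powr (\<epsilon> * real m)"
proof -
  define k where "k = nat \<lfloor>\<epsilon> * real m\<rfloor>"
  have kT: "real k \<le> \<epsilon> * real m" using assms by (simp add: k_def of_nat_floor)
  have Tm: "\<epsilon> * real m \<le> real m" using assms by (simp add: mult_left_le_one_le)
  show ?thesis
  proof (cases "k = 0")
    case True
    have "1 \<le> exp 1 / \<epsilon>"
      using assms exp_ge_add_one_self[of 1] by (simp add: le_divide_eq)
    then show ?thesis using True assms by (simp add: k_def ge_one_powr_ge_zero)
  next
    case False
    have "k \<le> m" using kT Tm by (metis of_nat_le_iff order.trans)
    then have "real (m choose k) \<le> (exp 1 * real m / real k) ^ k"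
      using False by (intro binomial_le_exp_mult_div_power) auto
    also have "\<dots> \<le> (exp 1 * real m / (\<epsilon> * real m)) powr (\<epsilon> * real m)"
      using False kT Tm by (intro exp_mult_div_power_le_powr) auto
    also have "exp 1 * real m / (\<epsilon> * real m) = exp 1 / \<epsilon>"
      using False kT by auto
    finally show ?thesis by (simp add: k_def)
  qed
qed

lemma power_le_powr_of_le_exponent:
  fixes a b y :: real
  assumes "0 \<le> a" "a \<le> b" "0 < b" "b \<le> 1" "y \<le> real g"
  shows "a ^ g \<le> b powr y"
proof -
  have "a ^ g \<le> b ^ g" using assms by (intro power_mono)
  also have "\<dots> = b powr real g" using assms by (simp add: powr_realpow)
  also have "\<dots> \<le> b powr y" using assms by (intro powr_mono') auto
  finally show ?thesis .
qed

lemma card_abs_ge_le_of_sum_sq_le: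
  fixes f :: "'a \<Rightarrow> real"
  assumes "finite I" "0 < w" "(\<Sum>i\<in>I. (f i)\<^sup>2) \<le> w\<^sup>2 * T"
  shows "real (card {i\<in>I. w \<le> \<bar>f i\<bar>}) \<le> T"
proof -
  have "real (card {i\<in>I. w \<le> \<bar>f i\<bar>}) * w\<^sup>2 \<le> (\<Sum>i\<in>{i\<in>I. w \<le> \<bar>f i\<bar>}. (f i)\<^sup>2)"
    using assms(2) abs_le_square_iff[of w]
    by (intro sum_bounded_below[where K = "w\<^sup>2", simplified]) simp
  also have "\<dots> \<le> (\<Sum>i\<in>I. (f i)\<^sup>2)"
    using assms(1) by (intro sum_mono2) auto
  finally have "real (card {i\<in>I. w \<le> \<bar>f i\<bar>}) * w\<^sup>2 \<le> T * w\<^sup>2"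
    using assms(3) by (simp add: mult.commute)
  then show ?thesis using assms(2) by simp
qed

section \<open>Bernoulli vectors and their characteristic function\<close>

definition bernoulli_real_pmf :: "real \<Rightarrow> real pmf" where
  "bernoulli_real_pmf p = map_pmf (\<lambda>b. if b then 1 else 0) (bernoulli_pmf p)"

definition bernoulli_vector :: "real \<Rightarrow> nat \<Rightarrow> (nat \<Rightarrow> real) pmf" where
  "bernoulli_vector p n = Pi_pmf {..<n} 0 (\<lambda>_. bernoulli_real_pmf p)"

definition bernoulli_char :: "real \<Rightarrow> real \<Rightarrow> complex" where
  "bernoulli_char p \<theta> = complex_of_real (1 - p) + complex_of_real p * cis \<theta>"

lemma finite_set_pmf_Pi_pmf:
  assumes "finite A" "\<And>i. i \<in> A \<Longrightarrow> finite (set_pmf (D i))"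
  shows "finite (set_pmf (Pi_pmf A d D))"
  using assms by (intro finite_subset[OF set_Pi_pmf_subset'] finite_PiE_dflt) auto

lemma finite_set_pmf_bernoulli_real_pmf: "finite (set_pmf (bernoulli_real_pmf p))"
  by (simp add: bernoulli_real_pmf_def)

lemma expectation_bernoulli_real_pmf:
  fixes f :: "real \<Rightarrow> 'b::{banach, second_countable_topology}"
  assumes "0 \<le> p" "p \<le> 1"
  shows "measure_pmf.expectation (bernoulli_real_pmf p) f = (1 - p) *\<^sub>R f 0 + p *\<^sub>R f 1"
proof -
  have "measure_pmf.expectation (bernoulli_real_pmf p) f
        = (\<Sum>b\<in>{True, False}. pmf (bernoulli_pmf p) b *\<^sub>R f (if b then 1 else 0))"
    unfolding bernoulli_real_pmf_def integral_map_pmf by (rule integral_measure_pmf) auto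
  then show ?thesis using assms by (simp add: add.commute)
qed

lemma expectation_cis_sum_Pi_pmf:
  assumes "finite A"
  shows "measure_pmf.expectation (Pi_pmf A d D) (\<lambda>r. cis (\<Sum>j\<in>A. f j (r j)))
         = (\<Prod>j\<in>A. measure_pmf.expectation (D j) (\<lambda>y. cis (f j y)))"
proof -
  let ?P = "measure_pmf (Pi_pmf A d D)"
  have "prob_space.indep_vars ?P (\<lambda>_. borel) (\<lambda>j r. cis (f j (r j))) A"
    by (rule prob_space.indep_vars_compose2[OF measure_pmf.prob_space_axioms
          indep_vars_Pi_pmf[OF assms], where Y = "\<lambda>j y. cis (f j y)"]) simp_all
  moreover have "integrable ?P (\<lambda>r. cis (f j (r j)))" for j
    by (intro measure_pmf.integrable_const_bound[where B = 1]) simp_all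
  ultimately have "measure_pmf.expectation (Pi_pmf A d D) (\<lambda>r. \<Prod>j\<in>A. cis (f j (r j)))
      = (\<Prod>j\<in>A. measure_pmf.expectation (Pi_pmf A d D) (\<lambda>r. cis (f j (r j))))"
    by (intro prob_space.indep_vars_lebesgue_integral[OF measure_pmf.prob_space_axioms assms])
  also have "\<dots> = (\<Prod>j\<in>A. measure_pmf.expectation (D j) (\<lambda>y. cis (f j y)))"
  proof (rule prod.cong[OF refl])
    fix j assume "j \<in> A"
    then have "map_pmf (\<lambda>r. r j) (Pi_pmf A d D) = D j"
      using assms by (simp add: Pi_pmf_component)
    then show "measure_pmf.expectation (Pi_pmf A d D) (\<lambda>r. cis (f j (r j)))
               = measure_pmf.expectation (D j) (\<lambda>y. cis (f j y))"
      using integral_map_pmf[of "\<lambda>r. r j" "Pi_pmf A d D" "\<lambda>y. cis (f j y)"] by simp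
  qed
  finally show ?thesis by (simp only: cis_sum[OF assms])
qed

lemma expectation_cis_bernoulli_real_pmf:
  "0 \<le> p \<Longrightarrow> p \<le> 1 \<Longrightarrow>
   measure_pmf.expectation (bernoulli_real_pmf p) (\<lambda>y. cis (\<theta> * y)) = bernoulli_char p \<theta>"
  by (simp add: expectation_bernoulli_real_pmf bernoulli_char_def scaleR_conv_of_real)

lemma norm_bernoulli_char_sq:
  "(norm (bernoulli_char p \<theta>))\<^sup>2 = 1 - 2 * p * (1 - p) * (1 - cos \<theta>)"
proof -
  have "(norm (bernoulli_char p \<theta>))\<^sup>2 = (1 - p + p * cos \<theta>)\<^sup>2 + (p * sin \<theta>)\<^sup>2"
    by (simp add: bernoulli_char_def cmod_power2)
  also have "\<dots> = (1 - p)\<^sup>2 + 2 * (1 - p) * p * cos \<theta> + p\<^sup>2 * ((sin \<theta>)\<^sup>2 + (cos \<theta>)\<^sup>2)"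
    by algebra
  also have "\<dots> = 1 - 2 * p * (1 - p) * (1 - cos \<theta>)"
    by (simp add: power2_eq_square algebra_simps)
  finally show ?thesis .
qed

lemma norm_bernoulli_char_le_1:
  assumes "0 \<le> p" "p \<le> 1"
  shows "norm (bernoulli_char p \<theta>) \<le> 1"
proof -
  have "(norm (bernoulli_char p \<theta>))\<^sup>2 \<le> 1\<^sup>2"
    using assms by (simp add: norm_bernoulli_char_sq)
  then show ?thesis by (rule power2_le_imp_le) simp
qed

lemma norm_bernoulli_char_le_exp:
  assumes "0 \<le> p" "p \<le> 1" "\<bar>\<theta>\<bar> \<le> 1"
  shows "norm (bernoulli_char p \<theta>) \<le> exp (- (p * (1 - p) * \<theta>\<^sup>2 / 4))"
proof -
  have "p * (1 - p) * (\<theta>\<^sup>2 / 4) \<le> p * (1 - p) * (1 - cos \<theta>)"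
    using assms one_minus_cos_ge_sq_div_4[OF assms(3)] by (intro mult_left_mono) auto
  then have "(norm (bernoulli_char p \<theta>))\<^sup>2 \<le> 1 + (- (p * (1 - p) * \<theta>\<^sup>2 / 2))"
    by (simp add: norm_bernoulli_char_sq)
  also have "\<dots> \<le> exp (- (p * (1 - p) * \<theta>\<^sup>2 / 2))" by (rule exp_ge_add_one_self)
  also have "\<dots> = (exp (- (p * (1 - p) * \<theta>\<^sup>2 / 4)))\<^sup>2"
    by (simp add: exp_double[symmetric])
  finally show ?thesis by (rule power2_le_imp_le) simp
qed

lemma norm_charfun_bernoulli_vector:
  assumes "0 \<le> p" "p \<le> 1"
  shows "norm (measure_pmf.expectation (bernoulli_vector p n) (\<lambda>r. cis (t * ((\<Sum>j<n. r j * x j) + c))))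
         = (\<Prod>j<n. norm (bernoulli_char p (t * x j)))"
proof -
  have "t * ((\<Sum>j<n. r j * x j) + c) = t * c + (\<Sum>j<n. t * x j * r j)" for r
    by (simp add: sum_distrib_left algebra_simps)
  then have "cis (t * ((\<Sum>j<n. r j * x j) + c)) = cis (t * c) * cis (\<Sum>j<n. t * x j * r j)" for r
    by (simp add: cis_mult)
  then have "measure_pmf.expectation (bernoulli_vector p n) (\<lambda>r. cis (t * ((\<Sum>j<n. r j * x j) + c)))
      = cis (t * c) * (\<Prod>j<n. bernoulli_char p (t * x j))"
    using assms expectation_cis_sum_Pi_pmf[of "{..<n}" 0 "\<lambda>_. bernoulli_real_pmf p" "\<lambda>j y. t * x j * y"]
    by (simp add: bernoulli_vector_def expectation_cis_bernoulli_real_pmf)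
  then show ?thesis by (simp add: norm_mult prod_norm)
qed

lemma norm_charfun_bernoulli_vector_le:
  assumes "0 \<le> p" "p \<le> 1" "S \<subseteq> {..<n}" and small: "\<And>j. j \<in> S \<Longrightarrow> \<bar>t * x j\<bar> \<le> 1"
  shows "norm (measure_pmf.expectation (bernoulli_vector p n) (\<lambda>r. cis (t * ((\<Sum>j<n. r j * x j) + c))))
         \<le> exp (- (p * (1 - p) * t\<^sup>2 * (\<Sum>j\<in>S. (x j)\<^sup>2) / 4))"
proof -
  have fin: "finite S" using assms(3) by (rule finite_subset) simp
  have "(\<Prod>j<n. norm (bernoulli_char p (t * x j)))
        = (\<Prod>j\<in>{..<n}-S. norm (bernoulli_char p (t * x j))) * (\<Prod>j\<in>S. norm (bernoulli_char p (t * x j)))"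
    by (rule prod.subset_diff[OF assms(3)]) simp
  also have "\<dots> \<le> 1 * (\<Prod>j\<in>S. exp (- (p * (1 - p) * (t * x j)\<^sup>2 / 4)))"
    using assms by (intro mult_mono prod_le_1 prod_mono prod_nonneg conjI norm_bernoulli_char_le_1
        norm_bernoulli_char_le_exp) auto
  also have "\<dots> = exp (- (p * (1 - p) * t\<^sup>2 * (\<Sum>j\<in>S. (x j)\<^sup>2) / 4))"
    by (simp add: exp_sum[OF fin, symmetric] sum_negf sum_divide_distrib sum_distrib_left
        power_mult_distrib mult.assoc)
  finally show ?thesis using assms by (simp add: norm_charfun_bernoulli_vector)
qed

section \<open>Anticoncentration of a single row\<close>

lemma sum_cos_diff_eq_sum_sq:
  "(\<Sum>k\<le>N. \<Sum>l\<le>N. cos ((real k - real l) * a))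
   = (\<Sum>k\<le>N. cos (real k * a))\<^sup>2 + (\<Sum>k\<le>N. sin (real k * a))\<^sup>2"
  unfolding power2_eq_square sum_product
  by (simp add: sum.distrib[symmetric] cos_diff left_diff_distrib)

lemma sum_cos_diff_ge_12:
  assumes "\<bar>a\<bar> \<le> 1 / 6"
  shows "12 \<le> (\<Sum>k\<le>(3::nat). \<Sum>l\<le>(3::nat). cos ((real k - real l) * a))"
proof -
  have "7 / 8 \<le> cos (real k * a)" if "k \<le> 3" for k
  proof -
    have "\<bar>real k * a\<bar> \<le> 3 * (1 / 6)"
      unfolding abs_mult using that assms by (intro mult_mono) auto
    then have "(real k * a)\<^sup>2 \<le> (1 / 2)\<^sup>2"
      by (intro power2_le_iff_abs_le[THEN iffD2]) simp_all
    then show ?thesis using cos_ge_one_minus_sq_div_2[of "real k * a"] by (simp add: power2_eq_square)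
  qed
  then have "real (card {..(3::nat)}) * (7 / 8) \<le> (\<Sum>k\<le>(3::nat). cos (real k * a))"
    by (intro sum_bounded_below) simp
  then have "(7 / 2)\<^sup>2 \<le> (\<Sum>k\<le>(3::nat). cos (real k * a))\<^sup>2"
    by (intro power_mono) simp_all
  then show ?thesis unfolding sum_cos_diff_eq_sum_sq by (simp add: power2_eq_square add_increasing2)
qed

lemma expectation_cos_le_norm_charfun:
  fixes M :: "'a pmf" and Z :: "'a \<Rightarrow> real"
  shows "measure_pmf.expectation M (\<lambda>a. cos (t * Z a))
         \<le> norm (measure_pmf.expectation M (\<lambda>a. cis (t * Z a)))"
proof -
  have "measure_pmf.expectation M (\<lambda>a. cos (t * Z a))
        = Re (measure_pmf.expectation M (\<lambda>a. cis (t * Z a)))"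
    by (simp add: integral_Re[symmetric] measure_pmf.integrable_const_bound[where B = 1])
  then show ?thesis by (simp add: complex_Re_le_cmod)
qed

lemma expectation_sum_cos_diff_le:
  fixes M :: "'a pmf" and Z :: "'a \<Rightarrow> real"
  assumes char: "\<And>d::nat. d \<in> {1, 2, 3} \<Longrightarrow>
                 norm (measure_pmf.expectation M (\<lambda>a. cis (real d * h * Z a))) \<le> \<delta>"
  shows "measure_pmf.expectation M
           (\<lambda>a. \<Sum>k\<le>(3::nat). \<Sum>l\<le>(3::nat). cos ((real k - real l) * h * Z a)) \<le> 4 + 12 * \<delta>"
proof -
  have integrable: "integrable M (\<lambda>a. cos (t * Z a))" for t
    by (intro measure_pmf.integrable_const_bound[where B = 1]) simp_all
  have cos_term: "measure_pmf.expectation M (\<lambda>a. cos ((real k - real l) * h * Z a))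
                  \<le> (if k = l then 1 else \<delta>)"
    if "k \<le> 3" "l \<le> 3" for k l :: nat
  proof (cases "k = l")
    case False
    define d where "d = (if l < k then k - l else l - k)"
    have "d \<in> {1, 2, 3}" using that False by (auto simp: d_def)
    have "(real k - real l) * h * z = real d * h * z \<or> (real k - real l) * h * z = - (real d * h * z)"
      for z by (cases "l < k") (auto simp: d_def of_nat_diff algebra_simps)
    then have "cos ((real k - real l) * h * z) = cos (real d * h * z)" for z
      by (metis cos_minus)
    then show ?thesis
      using False expectation_cos_le_norm_charfun[of M "real d * h" Z] char[OF \<open>d \<in> {1, 2, 3}\<close>]
      by simp
  qed simp
  have "measure_pmf.expectation M (\<lambda>a. \<Sum>k\<le>(3::nat). \<Sum>l\<le>(3::nat). cos ((real k - real l) * h * Z a))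
        = (\<Sum>k\<le>(3::nat). \<Sum>l\<le>(3::nat). measure_pmf.expectation M (\<lambda>a. cos ((real k - real l) * h * Z a)))"
    by (simp add: Bochner_Integration.integral_sum integrable)
  also have "\<dots> \<le> (\<Sum>k\<le>(3::nat). \<Sum>l\<le>(3::nat). if k = l then 1 else \<delta>)"
    by (intro sum_mono cos_term) auto
  also have "\<dots> = 4 + 12 * \<delta>"
    by (simp add: numeral_eq_Suc atMost_Suc)
  finally show ?thesis .
qed

lemma prob_abs_less_le_of_norm_charfun:
  fixes M :: "'a pmf" and Z :: "'a \<Rightarrow> real"
  assumes "0 < h"
    and char: "\<And>d::nat. d \<in> {1, 2, 3} \<Longrightarrow>
               norm (measure_pmf.expectation M (\<lambda>a. cis (real d * h * Z a))) \<le> \<delta>"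
  shows "measure_pmf.prob M {a. \<bar>Z a\<bar> < 1 / (6 * h)} \<le> (1 + 3 * \<delta>) / 3"
proof -
  define K where "K z = (\<Sum>k\<le>(3::nat). \<Sum>l\<le>(3::nat). cos ((real k - real l) * h * z))" for z
  have "{a. \<bar>Z a\<bar> < 1 / (6 * h)} \<subseteq> {a. 12 \<le> K (Z a)}"
  proof
    fix a assume "a \<in> {a. \<bar>Z a\<bar> < 1 / (6 * h)}"
    then have "\<bar>h * Z a\<bar> \<le> 1 / 6" using \<open>0 < h\<close> by (simp add: abs_mult field_simps)
    then show "a \<in> {a. 12 \<le> K (Z a)}" using sum_cos_diff_ge_12[of "h * Z a"] by (simp add: K_def mult.assoc)
  qed
  then have "measure_pmf.prob M {a. \<bar>Z a\<bar> < 1 / (6 * h)} \<le> measure_pmf.prob M {a. 12 \<le> K (Z a)}"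
    by (rule measure_pmf.finite_measure_mono) simp
  also have "\<dots> \<le> measure_pmf.expectation M (\<lambda>a. K (Z a)) / 12"
  proof -
    have "integrable M (\<lambda>a. K (Z a))"
      unfolding K_def by (intro Bochner_Integration.integrable_sum measure_pmf.integrable_const_bound[where B = 1]) simp_all
    moreover have "0 \<le> K z" for z
      using sum_cos_diff_eq_sum_sq[of "h * z" 3] by (simp add: K_def mult.assoc)
    ultimately show ?thesis
      using integral_Markov_inequality_measure[of M "\<lambda>a. K (Z a)" UNIV 12] by simp
  qed
  also have "\<dots> \<le> (4 + 12 * \<delta>) / 12"
    unfolding K_def using char by (intro divide_right_mono expectation_sum_cos_diff_le) auto
  finally show ?thesis by simp
qed

lemma prob_bernoulli_vector_near_le_half:
  assumes p: "0 < p" "p < 1" and w: "0 < w" "10^4 * w\<^sup>2 \<le> p * (1 - p)"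
    and S: "S \<subseteq> {..<n}" "\<And>j. j \<in> S \<Longrightarrow> \<bar>x j\<bar> \<le> 2 * w" "1 / 2 \<le> (\<Sum>j\<in>S. (x j)\<^sup>2)"
  shows "measure_pmf.prob (bernoulli_vector p n) {r. \<bar>(\<Sum>j<n. r j * x j) + c\<bar> < w} \<le> 1 / 2"
proof -
  define h where "h = 1 / (6 * w)"
  have "0 < h" using w by (simp add: h_def)
  have "norm (measure_pmf.expectation (bernoulli_vector p n)
                (\<lambda>r. cis (real d * h * ((\<Sum>j<n. r j * x j) + c)))) \<le> 1 / 16"
    if d: "d \<in> {1, 2, 3}" for d :: nat
  proof -
    define t where "t = real d * h"
    have "\<bar>t * x j\<bar> \<le> 1" if "j \<in> S" for j
    proof -
      have "\<bar>t * x j\<bar> \<le> (3 * h) * (2 * w)"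
        unfolding abs_mult t_def using d S(2)[OF that] \<open>0 < h\<close> by (intro mult_mono) auto
      also have "\<dots> = 1" using w by (simp add: h_def)
      finally show ?thesis .
    qed
    then have "norm (measure_pmf.expectation (bernoulli_vector p n) (\<lambda>r. cis (t * ((\<Sum>j<n. r j * x j) + c))))
               \<le> exp (- (p * (1 - p) * t\<^sup>2 * (\<Sum>j\<in>S. (x j)\<^sup>2) / 4))"
      using p S(1) by (intro norm_charfun_bernoulli_vector_le) auto
    also have "\<dots> \<le> exp (- 15)"
    proof -
      have "10^4 / 36 \<le> p * (1 - p) * h\<^sup>2"
        using w by (simp add: h_def power_divide field_simps)
      also have "\<dots> \<le> p * (1 - p) * t\<^sup>2"
        using p d \<open>0 < h\<close> by (intro mult_left_mono power_mono) (auto simp: t_def)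
      finally have "10^4 / 36 * (1 / 2) \<le> p * (1 - p) * t\<^sup>2 * (\<Sum>j\<in>S. (x j)\<^sup>2)"
        using S(3) by (intro mult_mono) auto
      then show ?thesis by simp
    qed
    also have "\<dots> \<le> 1 / 16"
      using exp_minus_le_inverse_one_plus[of 15] by simp
    finally show ?thesis by (simp add: t_def)
  qed
  then have "measure_pmf.prob (bernoulli_vector p n) {r. \<bar>(\<Sum>j<n. r j * x j) + c\<bar> < 1 / (6 * h)}
             \<le> (1 + 3 * (1 / 16)) / 3"
    using \<open>0 < h\<close> by (intro prob_abs_less_le_of_norm_charfun) auto
  then show ?thesis using w by (simp add: h_def)
qed

lemma prob_bernoulli_vector_condition_coord:
  assumes "0 \<le> p" "p \<le> 1" "j0 < n"
  defines "Q \<equiv> Pi_pmf ({..<n} - {j0}) 0 (\<lambda>_. bernoulli_real_pmf p)"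
  shows "measure_pmf.prob (bernoulli_vector p n) E
         = p * measure_pmf.prob Q {f. f(j0 := 1) \<in> E} + (1 - p) * measure_pmf.prob Q {f. f(j0 := 0) \<in> E}"
proof -
  have "bernoulli_vector p n = Pi_pmf (insert j0 ({..<n} - {j0})) 0 (\<lambda>_. bernoulli_real_pmf p)"
    using assms by (simp add: bernoulli_vector_def insert_absorb)
  also have "\<dots> = bernoulli_real_pmf p \<bind> (\<lambda>y. map_pmf (\<lambda>f. f(j0 := y)) Q)"
    by (subst Pi_pmf_insert') (auto simp: Q_def map_pmf_def)
  also have "\<dots> = bernoulli_pmf p \<bind> (\<lambda>b. map_pmf (\<lambda>f. f(j0 := if b then 1 else 0)) Q)"
    by (simp add: bernoulli_real_pmf_def bind_map_pmf)
  finally have "measure_pmf.prob (bernoulli_vector p n) E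
      = measure_pmf.expectation (bernoulli_pmf p \<bind> (\<lambda>b. map_pmf (\<lambda>f. f(j0 := if b then 1 else 0)) Q))
          (indicator E)"
    by simp
  also have "\<dots> = (\<Sum>b\<in>{True, False}. pmf (bernoulli_pmf p) b *\<^sub>R
                     measure_pmf.expectation (map_pmf (\<lambda>f. f(j0 := if b then 1 else 0)) Q) (indicator E))"
    using finite_set_pmf_Pi_pmf[OF _ finite_set_pmf_bernoulli_real_pmf, of "{..<n} - {j0}"]
    by (intro pmf_expectation_bind) (auto simp: Q_def)
  finally show ?thesis
    using assms by (simp add: vimage_def)
qed

lemma prob_bernoulli_vector_near_le_of_large_coord:
  assumes p: "0 \<le> p" "p \<le> 1" and j0: "j0 < n" and large: "2 * w \<le> \<bar>x j0\<bar>"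
  shows "measure_pmf.prob (bernoulli_vector p n) {r. \<bar>(\<Sum>j<n. r j * x j) + c\<bar> < w} \<le> max p (1 - p)"
proof -
  define E where "E = {r. \<bar>(\<Sum>j<n. r j * x j) + c\<bar> < w}"
  define Q where "Q = Pi_pmf ({..<n} - {j0}) 0 (\<lambda>_. bernoulli_real_pmf p)"
  define A where "A y = {f. f(j0 := y) \<in> E}" for y :: real
  have "A 1 \<inter> A 0 = {}"
  proof (intro equals0I)
    fix f assume "f \<in> A 1 \<inter> A 0"
    moreover have "(\<Sum>j<n. (f(j0 := y)) j * x j) = (\<Sum>j\<in>{..<n} - {j0}. f j * x j) + y * x j0" for y
      using j0 by (simp add: sum.remove[of "{..<n}" j0] add.commute)
    ultimately show False using large by (auto simp: A_def E_def)
  qed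
  then have "measure_pmf.prob Q (A 1) + measure_pmf.prob Q (A 0) \<le> 1"
    by (simp add: measure_pmf.finite_measure_Union[symmetric])
  have split: "measure_pmf.prob (bernoulli_vector p n) E
                = p * measure_pmf.prob Q (A 1) + (1 - p) * measure_pmf.prob Q (A 0)"
    unfolding A_def Q_def using p j0 by (rule prob_bernoulli_vector_condition_coord)
  have "measure_pmf.prob (bernoulli_vector p n) E
        \<le> max p (1 - p) * (measure_pmf.prob Q (A 1) + measure_pmf.prob Q (A 0))"
    unfolding split distrib_left by (intro add_mono mult_right_mono) auto
  also have "\<dots> \<le> max p (1 - p)"
    using \<open>measure_pmf.prob Q (A 1) + measure_pmf.prob Q (A 0) \<le> 1\<close> p by (intro mult_left_le) auto
  finally show ?thesis by (simp add: E_def)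
qed

lemma bernoulli_vector_small_ball:
  assumes p: "0 < p" "p \<le> 1 / 2"
  shows "\<exists>w>0. \<forall>n (x :: nat \<Rightarrow> real) c. (\<Sum>j<n. (x j)\<^sup>2) = 1 \<longrightarrow>
           measure_pmf.prob (bernoulli_vector p n) {r. \<bar>(\<Sum>j<n. r j * x j) + c\<bar> < w} \<le> 1 - p"
proof -
  define w where "w = sqrt (p * (1 - p)) / 100"
  have "0 < p * (1 - p)" using p by simp
  then have "0 < w" and w_sq: "10^4 * w\<^sup>2 \<le> p * (1 - p)"
    by (simp_all add: w_def power_divide)
  have "measure_pmf.prob (bernoulli_vector p n) {r. \<bar>(\<Sum>j<n. r j * x j) + c\<bar> < w} \<le> 1 - p"
    if unit: "(\<Sum>j<n. (x j)\<^sup>2) = 1" for n x c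
  proof (cases "1 / 2 \<le> (\<Sum>j\<in>{j\<in>{..<n}. \<bar>x j\<bar> \<le> 2 * w}. (x j)\<^sup>2)")
    case True
    then have "measure_pmf.prob (bernoulli_vector p n) {r. \<bar>(\<Sum>j<n. r j * x j) + c\<bar> < w} \<le> 1 / 2"
      using p \<open>0 < w\<close> w_sq by (intro prob_bernoulli_vector_near_le_half) auto
    then show ?thesis using p by simp
  next
    case False
    have "\<exists>j0<n. 2 * w \<le> \<bar>x j0\<bar>"
    proof (rule ccontr)
      assume "\<not> (\<exists>j0<n. 2 * w \<le> \<bar>x j0\<bar>)"
      then have "{j\<in>{..<n}. \<bar>x j\<bar> \<le> 2 * w} = {..<n}" by force
      then show False using False unit by simp
    qed
    then obtain j0 where "j0 < n" "2 * w \<le> \<bar>x j0\<bar>" by blast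
    then have "measure_pmf.prob (bernoulli_vector p n) {r. \<bar>(\<Sum>j<n. r j * x j) + c\<bar> < w}
               \<le> max p (1 - p)"
      using p by (intro prob_bernoulli_vector_near_le_of_large_coord) auto
    then show ?thesis using p by simp
  qed
  then show ?thesis using \<open>0 < w\<close> by blast
qed

section \<open>Independent rows\<close>

lemma Pi_pmf_Times:
  assumes A: "finite A" and B: "finite B"
  shows "Pi_pmf (A \<times> B) d D
         = map_pmf case_prod (Pi_pmf A (\<lambda>_. d) (\<lambda>i. Pi_pmf B d (\<lambda>j. D (i, j))))"
proof (rule pmf_eqI)
  fix M :: "'a \<times> 'b \<Rightarrow> 'c"
  let ?row = "\<lambda>i. if \<forall>j. j \<notin> B \<longrightarrow> M (i, j) = d then \<Prod>j\<in>B. pmf (D (i, j)) (M (i, j)) else 0"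
  have "inj (\<lambda>R (i, j). R i j :: 'c)"
    by (intro injI) (metis case_prod_curry curry_case_prod)
  then have "pmf (map_pmf case_prod (Pi_pmf A (\<lambda>_. d) (\<lambda>i. Pi_pmf B d (\<lambda>j. D (i, j))))) M
      = pmf (Pi_pmf A (\<lambda>_. d) (\<lambda>i. Pi_pmf B d (\<lambda>j. D (i, j)))) (\<lambda>i j. M (i, j))"
    using pmf_map_inj'[of "\<lambda>R (i, j). R i j" _ "\<lambda>i j. M (i, j)"] by simp
  also have "\<dots> = (if \<forall>i. i \<notin> A \<longrightarrow> (\<lambda>j. M (i, j)) = (\<lambda>_. d) then \<Prod>i\<in>A. ?row i else 0)"
    by (simp add: pmf_Pi A B) blast
  also have "\<dots> = pmf (Pi_pmf (A \<times> B) d D) M"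
  proof (cases "\<forall>ij. ij \<notin> A \<times> B \<longrightarrow> M ij = d")
    case True
    then have "(\<Prod>i\<in>A. ?row i) = (\<Prod>i\<in>A. \<Prod>j\<in>B. pmf (D (i, j)) (M (i, j)))"
      by (intro prod.cong) auto
    then show ?thesis
      using True A B by (simp add: pmf_Pi fun_eq_iff prod.cartesian_product case_prod_beta')
  next
    case False
    then obtain i j where ij: "(i, j) \<notin> A \<times> B" "M (i, j) \<noteq> d" by auto
    have "(\<Prod>i\<in>A. ?row i) = 0" if "i \<in> A"
      using that ij A by (intro prod_zero bexI[of _ i]) auto
    then show ?thesis
      using False ij A B by (auto simp: pmf_Pi fun_eq_iff)
  qed
  finally show "pmf (Pi_pmf (A \<times> B) d D) M
      = pmf (map_pmf case_prod (Pi_pmf A (\<lambda>_. d) (\<lambda>i. Pi_pmf B d (\<lambda>j. D (i, j))))) M"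
    by simp
qed

lemma prob_bernoulli_matrix_rows_in:
  assumes "G \<subseteq> {..<m}"
  shows "measure_pmf.prob (bernoulli_matrix p m n) {M. \<forall>i\<in>G. (\<lambda>j. M (i, j)) \<in> X}
         = measure_pmf.prob (bernoulli_vector p n) X ^ card G"
proof -
  define P where "P = Pi_pmf {..<m} (\<lambda>_. 0) (\<lambda>_. bernoulli_vector p n)"
  have "bernoulli_matrix p m n = map_pmf case_prod P"
    by (simp add: P_def bernoulli_matrix_def bernoulli_vector_def bernoulli_real_pmf_def Pi_pmf_Times)
  then have "measure_pmf.prob (bernoulli_matrix p m n) {M. \<forall>i\<in>G. (\<lambda>j. M (i, j)) \<in> X}
             = measure_pmf.prob P (case_prod -` {M. \<forall>i\<in>G. (\<lambda>j. M (i, j)) \<in> X})"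
    by simp
  also have "case_prod -` {M. \<forall>i\<in>G. (\<lambda>j. M (i, j)) \<in> X} = Pi {..<m} (\<lambda>i. if i \<in> G then X else UNIV)"
    using assms by (auto simp: Pi_def)
  also have "measure_pmf.prob P \<dots>
             = (\<Prod>i<m. measure_pmf.prob (bernoulli_vector p n) (if i \<in> G then X else UNIV))"
    unfolding P_def by (rule measure_Pi_pmf_Pi) simp
  also have "\<dots> = (\<Prod>i\<in>G. measure_pmf.prob (bernoulli_vector p n) X)"
    using assms by (simp add: if_distrib prod.If_cases Int_absorb1)
  finally show ?thesis by simp
qed

lemma prob_bernoulli_matrix_few_rows_outside:
  assumes "k \<le> m"
  shows "measure_pmf.prob (bernoulli_matrix p m n) {M. card {i\<in>{..<m}. (\<lambda>j. M (i, j)) \<notin> X} \<le> k}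
         \<le> real (m choose k) * measure_pmf.prob (bernoulli_vector p n) X ^ (m - k)"
proof -
  define \<G> where "\<G> = {G. G \<subseteq> {..<m} \<and> card G = m - k}"
  have "{M. card {i\<in>{..<m}. (\<lambda>j. M (i, j)) \<notin> X} \<le> k} \<subseteq> (\<Union>G\<in>\<G>. {M. \<forall>i\<in>G. (\<lambda>j. M (i, j)) \<in> X})"
  proof
    fix M assume "M \<in> {M. card {i\<in>{..<m}. (\<lambda>j. M (i, j)) \<notin> X} \<le> k}"
    moreover have "{i\<in>{..<m}. (\<lambda>j. M (i, j)) \<in> X} = {..<m} - {i\<in>{..<m}. (\<lambda>j. M (i, j)) \<notin> X}"
      by blast
    moreover have "card ({..<m} - {i\<in>{..<m}. (\<lambda>j. M (i, j)) \<notin> X})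
                   = m - card {i\<in>{..<m}. (\<lambda>j. M (i, j)) \<notin> X}"
      by (subst card_Diff_subset) auto
    ultimately have "m - k \<le> card {i\<in>{..<m}. (\<lambda>j. M (i, j)) \<in> X}"
      by simp
    then obtain G where "G \<subseteq> {i\<in>{..<m}. (\<lambda>j. M (i, j)) \<in> X}" "card G = m - k"
      by (meson obtain_subset_with_card_n)
    then show "M \<in> (\<Union>G\<in>\<G>. {M. \<forall>i\<in>G. (\<lambda>j. M (i, j)) \<in> X})" by (auto simp: \<G>_def)
  qed
  then have "measure_pmf.prob (bernoulli_matrix p m n) {M. card {i\<in>{..<m}. (\<lambda>j. M (i, j)) \<notin> X} \<le> k}
      \<le> measure_pmf.prob (bernoulli_matrix p m n) (\<Union>G\<in>\<G>. {M. \<forall>i\<in>G. (\<lambda>j. M (i, j)) \<in> X})"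
    by (intro measure_pmf.finite_measure_mono) auto
  also have "\<dots> \<le> (\<Sum>G\<in>\<G>. measure_pmf.prob (bernoulli_matrix p m n) {M. \<forall>i\<in>G. (\<lambda>j. M (i, j)) \<in> X})"
    by (intro measure_pmf.finite_measure_subadditive_finite) (auto simp: \<G>_def)
  also have "\<dots> = (\<Sum>G\<in>\<G>. measure_pmf.prob (bernoulli_vector p n) X ^ (m - k))"
    by (intro sum.cong) (auto simp: \<G>_def prob_bernoulli_matrix_rows_in)
  also have "\<dots> = real (m choose k) * measure_pmf.prob (bernoulli_vector p n) X ^ (m - k)"
    using assms by (simp add: \<G>_def n_subsets binomial_symmetric[symmetric])
  finally show ?thesis .
qed

lemma card_far_rows_le_of_shifted_norm_le:
  assumes "0 < w" "0 \<le> \<epsilon>" "2 \<le> n"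
    and small: "shifted_norm (n - 1) n M s x \<le> w / 2 * sqrt (\<epsilon> * real n)"
  shows "card {i\<in>{..<n - 1}. (\<lambda>j. M (i, j)) \<notin> {r. \<bar>(\<Sum>j<n. r j * x j) + s * (\<Sum>j<n. x j)\<bar> < w}}
         \<le> nat \<lfloor>\<epsilon> * real (n - 1)\<rfloor>"
proof -
  define Y where "Y i = (\<Sum>j<n. M (i, j) * x j) + s * (\<Sum>j<n. x j)" for i
  have "(\<Sum>j<n. (M (i, j) + s) * x j) = Y i" for i
    by (simp add: Y_def algebra_simps sum.distrib sum_distrib_left)
  then have "sqrt (\<Sum>i<n - 1. (Y i)\<^sup>2) \<le> sqrt ((w / 2)\<^sup>2 * (\<epsilon> * real n))"
    using small \<open>0 < w\<close> by (simp add: shifted_norm_def real_sqrt_mult)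
  then have "(\<Sum>i<n - 1. (Y i)\<^sup>2) \<le> (w / 2)\<^sup>2 * (\<epsilon> * real n)" by simp
  also have "\<dots> \<le> w\<^sup>2 * (\<epsilon> * real (n - 1))"
  proof -
    have "\<epsilon> * real n \<le> \<epsilon> * (4 * real (n - 1))"
      using assms(2,3) by (intro mult_left_mono) auto
    then have "w\<^sup>2 * (\<epsilon> * real n) \<le> w\<^sup>2 * (\<epsilon> * (4 * real (n - 1)))"
      by (rule mult_left_mono) simp
    then show ?thesis by (simp add: power_divide)
  qed
  finally have "real (card {i\<in>{..<n - 1}. w \<le> \<bar>Y i\<bar>}) \<le> \<epsilon> * real (n - 1)"
    using \<open>0 < w\<close> by (intro card_abs_ge_le_of_sum_sq_le) auto
  then show ?thesis by (simp add: Y_def not_less le_nat_floor)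
qed

lemma prob_shifted_norm_le_of_row_small_ball:
  assumes "0 < w" "0 \<le> p" "p < 1" "0 < \<epsilon>" "\<epsilon> \<le> 1" "2 \<le> n"
    and row: "measure_pmf.prob (bernoulli_vector p n)
                {r. \<bar>(\<Sum>j<n. r j * x j) + s * (\<Sum>j<n. x j)\<bar> < w} \<le> 1 - p"
  shows "measure_pmf.prob (B1 p n) {M. shifted_norm (n - 1) n M s x \<le> w / 2 * sqrt (\<epsilon> * real n)}
         \<le> (exp 1 / \<epsilon>) powr (\<epsilon> * (real n - 1)) * (1 - p) powr ((real n - 1) * (1 - \<epsilon>))"
proof -
  define m where "m = n - 1"
  define k where "k = nat \<lfloor>\<epsilon> * real m\<rfloor>"
  define X where "X = {r. \<bar>(\<Sum>j<n. r j * x j) + s * (\<Sum>j<n. x j)\<bar> < w}"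
  have "real k \<le> \<epsilon> * real m" "\<epsilon> * real m \<le> real m"
    using assms by (simp_all add: k_def mult_left_le_one_le)
  then have "k \<le> m" "real m * (1 - \<epsilon>) \<le> real (m - k)"
    by (simp_all add: of_nat_diff algebra_simps)
  have "{M. shifted_norm (n - 1) n M s x \<le> w / 2 * sqrt (\<epsilon> * real n)}
        \<subseteq> {M. card {i\<in>{..<m}. (\<lambda>j. M (i, j)) \<notin> X} \<le> k}"
    using card_far_rows_le_of_shifted_norm_le[OF \<open>0 < w\<close>] assms by (auto simp: m_def k_def X_def)
  then have "measure_pmf.prob (B1 p n) {M. shifted_norm (n - 1) n M s x \<le> w / 2 * sqrt (\<epsilon> * real n)}
        \<le> measure_pmf.prob (bernoulli_matrix p m n) {M. card {i\<in>{..<m}. (\<lambda>j. M (i, j)) \<notin> X} \<le> k}"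
    by (simp add: B1_def m_def measure_pmf.finite_measure_mono)
  also have "\<dots> \<le> real (m choose k) * measure_pmf.prob (bernoulli_vector p n) X ^ (m - k)"
    by (rule prob_bernoulli_matrix_few_rows_outside[OF \<open>k \<le> m\<close>])
  also have "\<dots> \<le> (exp 1 / \<epsilon>) powr (\<epsilon> * real m) * (1 - p) powr (real m * (1 - \<epsilon>))"
    using assms \<open>real m * (1 - \<epsilon>) \<le> real (m - k)\<close> unfolding k_def X_def
    by (intro mult_mono binomial_floor_mult_le_powr power_le_powr_of_le_exponent) auto
  finally show ?thesis using \<open>2 \<le> n\<close> by (simp add: m_def of_nat_diff)
qed

theorem lemma3p4:
  fixes p :: real
  assumes "0 < p" and "p \<le> 1/2"
  shows "\<exists>\<gamma>>0. \<forall>\<epsilon> (n::nat) (s::real) (x::nat \<Rightarrow> real).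
           0 < \<epsilon> \<and> \<epsilon> \<le> 1 \<and> 2 \<le> n \<and> (\<Sum>j<n. (x j)^2) = 1 \<longrightarrow>
           measure_pmf.prob (B1 p n)
             {M. shifted_norm (n - 1) n M s x \<le> \<gamma> * sqrt (\<epsilon> * real n)}
           \<le> (exp 1 / \<epsilon>) powr (\<epsilon> * (real n - 1)) * (1 - p) powr ((real n - 1) * (1 - \<epsilon>))"
proof -
  obtain w where "0 < w" and row: "\<And>n x c. (\<Sum>j<n. (x j)\<^sup>2) = 1 \<Longrightarrow>
      measure_pmf.prob (bernoulli_vector p n) {r. \<bar>(\<Sum>j<n. r j * x j) + c\<bar> < w} \<le> 1 - p"
    using bernoulli_vector_small_ball[OF assms] by blast
  show ?thesis
  proof (intro exI[of _ "w / 2"] conjI allI impI)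
    fix \<epsilon> :: real and n :: nat and s :: real and x :: "nat \<Rightarrow> real"
    assume "0 < \<epsilon> \<and> \<epsilon> \<le> 1 \<and> 2 \<le> n \<and> (\<Sum>j<n. (x j)^2) = 1"
    then show "measure_pmf.prob (B1 p n) {M. shifted_norm (n - 1) n M s x \<le> w / 2 * sqrt (\<epsilon> * real n)}
               \<le> (exp 1 / \<epsilon>) powr (\<epsilon> * (real n - 1)) * (1 - p) powr ((real n - 1) * (1 - \<epsilon>))"
      using assms by (intro prob_shifted_norm_le_of_row_small_ball \<open>0 < w\<close> row) auto
  qed (use \<open>0 < w\<close> in simp)
qed

end
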